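(* Let $\Sigma$ be a non-empty finite or countably infinite alphabet, let $\mu_p$ be the probability map induced by a Bernoulli distribution $p$ on $\Sigma$, and let $\alpha\in\Sigma^\omega$ be $\mu_p$-distributed. The following are equivalent: (i) for every strongly connected DFA $A$ over $\Sigma$, if $A[\alpha]$ is infinite then $A[\alpha]$ is $\mu_p$-distributed; (ii) for every strongly connected DFA $A$ over $\Sigma$ and every $a\in\Sigma$, if $A[\alpha]$ is infinite then the limiting frequency $\lim_{N\to\infty}\#_a(A[\alpha]|_{\le N})/N$ exists and equals $p(a)$.
   Context: $\mu_p(a_1\cdots a_n)=\prod_i p(a_i)$ for $p:\Sigma\to[0,1]$ with $\sum_ap(a)=1$. $\#_w(v)$ counts occurrences of $w$ as a contiguous block in $v$; $\beta|_{\le N}$ is the length-$N$ prefix of $\beta$; $\beta\in\Sigma^\omega$ is $\mu_p$-distributed if $\lim_N\#_w(\beta|_{\le N})/N=\mu_p(w)$ for all $w\in\Sigma^+$. A DFA over $\Sigma$ has finitely many states, total transition function $\delta$, start state $q_s$ and accepting set $F$; $A[\alpha]$ is the subsequence of those $\alpha_i$ with $\delta^*(q_s,\alpha_1\cdots\alpha_{i-1})\in F$. $A$ is strongly connected if its underlying directed graph (edges $q\to\delta(q,a)$) is strongly connected. *)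

theory Defs
  imports "HOL-Analysis.Analysis" "HOL-Library.Countable"
begin

definition bernoulli_dist :: "('a \<Rightarrow> real) \<Rightarrow> bool" where
  "bernoulli_dist p \<longleftrightarrow> (\<forall>a. 0 \<le> p a \<and> p a \<le> 1) \<and> (p has_sum 1) UNIV"

definition mu :: "('a \<Rightarrow> real) \<Rightarrow> 'a list \<Rightarrow> real" where
  "mu p w = prod_list (map p w)"

definition occ :: "'a list \<Rightarrow> (nat \<Rightarrow> 'a) \<Rightarrow> nat \<Rightarrow> nat" where
  "occ w \<beta> N = card {i. i + length w \<le> N \<and> (\<forall>j<length w. \<beta> (i + j) = w ! j)}"

definition mu_distributed :: "('a \<Rightarrow> real) \<Rightarrow> (nat \<Rightarrow> 'a) \<Rightarrow> bool" where
  "mu_distributed p \<beta> \<longleftrightarrow>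
     (\<forall>w. w \<noteq> [] \<longrightarrow> (\<lambda>N. real (occ w \<beta> N) / real N) \<longlonglongrightarrow> mu p w)"

record ('s, 'a) dfa =
  states :: "'s set"
  delta  :: "'s \<Rightarrow> 'a \<Rightarrow> 's"
  start  :: 's
  accept :: "'s set"

definition wf_dfa :: "('s, 'a) dfa \<Rightarrow> bool" where
  "wf_dfa A \<longleftrightarrow> finite (states A) \<and> start A \<in> states A \<and> accept A \<subseteq> states A \<and>
     (\<forall>q\<in>states A. \<forall>a. delta A q a \<in> states A)"

definition dfa_edges :: "('s, 'a) dfa \<Rightarrow> ('s \<times> 's) set" where
  "dfa_edges A = {(q, delta A q a) | q a. q \<in> states A}"

definition strongly_connected :: "('s, 'a) dfa \<Rightarrow> bool" where
  "strongly_connected A \<longleftrightarrow> (\<forall>q\<in>states A. \<forall>q'\<in>states A. (q, q') \<in> (dfa_edges A)\<^sup>*)"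

primrec run :: "('s, 'a) dfa \<Rightarrow> (nat \<Rightarrow> 'a) \<Rightarrow> nat \<Rightarrow> 's" where
  "run A \<alpha> 0 = start A"
| "run A \<alpha> (Suc i) = delta A (run A \<alpha> i) (\<alpha> i)"

definition selected :: "('s, 'a) dfa \<Rightarrow> (nat \<Rightarrow> 'a) \<Rightarrow> nat set" where
  "selected A \<alpha> = {i. run A \<alpha> i \<in> accept A}"

text \<open>A[alpha] as a sequence (meaningful when selected A alpha is infinite).\<close>
definition dfa_select :: "('s, 'a) dfa \<Rightarrow> (nat \<Rightarrow> 'a) \<Rightarrow> nat \<Rightarrow> 'a" where
  "dfa_select A \<alpha> = (\<lambda>k. \<alpha> (enumerate (selected A \<alpha>) k))"

end

theory Submission
  imports Defs
begin

text \<open>(i) implies (ii) by specialising to one-letter words. Conversely, the frequency of a word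
  in \<open>A[\<alpha>]\<close> is computed by induction along the word: given \<open>u\<close> and \<open>A\<close>, one builds a strongly
  connected automaton \<open>B\<close> selecting exactly those positions selected by \<open>A\<close> at which the last
  \<open>|u|\<close> letters selected by \<open>A\<close> spell \<open>u\<close>. Then \<open>B[\<alpha>]\<close> is the subsequence of \<open>A[\<alpha>]\<close> formed by
  the letters that follow occurrences of \<open>u\<close>, so (ii) for \<open>B\<close> yields
  \<open>freq(u a) = freq(u) \<cdot> p(a)\<close>; if \<open>B[\<alpha>]\<close> is finite, \<open>u\<close> has frequency 0 anyway.\<close>

section \<open>Letter frequencies along subsequences\<close>

lemma tendsto_over_n_bounded_diff:
  fixes f g :: "nat \<Rightarrow> real"
  assumes "(\<lambda>t. g t / real t) \<longlonglongrightarrow> L" and "\<And>t. \<bar>f t - g t\<bar> \<le> K"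
  shows "(\<lambda>t. f t / real t) \<longlonglongrightarrow> L"
proof -
  have "(\<lambda>t. K / real t) \<longlonglongrightarrow> 0"
    by (rule tendsto_divide_0[OF tendsto_const
          filterlim_at_top_imp_at_infinity[OF filterlim_real_sequentially]])
  moreover have "eventually (\<lambda>t. norm ((f t - g t) / real t) \<le> K / real t) sequentially"
    using assms(2) by (auto simp: abs_divide intro!: always_eventually divide_right_mono)
  ultimately have "(\<lambda>t. (f t - g t) / real t) \<longlonglongrightarrow> 0"
    by (rule Lim_null_comparison[rotated])
  from tendsto_add[OF assms(1) this] show ?thesis
    by (simp add: diff_divide_distrib)
qed

lemma enumerate_range_strict_mono:
  fixes f :: "nat \<Rightarrow> nat"
  assumes "strict_mono f"
  shows "enumerate (range f) = f"
proof
  fix n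
  have "infinite (range f)"
    using assms finite_imageD strict_mono_imp_inj_on by blast
  then show "enumerate (range f) n = f n"
  proof (induction n)
    case 0
    then show ?case
      using assms by (auto simp: enumerate_0 strict_mono_less_eq intro!: Least_equality)
  next
    case (Suc n)
    then show ?case
      using assms by (auto simp: enumerate_Suc'' strict_mono_less strict_mono_less_eq
          Suc_le_eq intro!: Least_equality)
  qed
qed

lemma enumerate_image_strict_mono:
  fixes e :: "nat \<Rightarrow> nat" and M :: "nat set"
  assumes "strict_mono e" and "infinite M"
  shows "enumerate (e ` M) = e \<circ> enumerate M"
proof -
  have "e ` M = range (e \<circ> enumerate M)"
    by (metis range_enumerate[OF assms(2)] image_comp)
  moreover have "strict_mono (e \<circ> enumerate M)"
    using assms strict_mono_enumerate by (simp add: strict_mono_def)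
  ultimately show ?thesis
    using enumerate_range_strict_mono by metis
qed

lemma enumerate_initial_segment:
  fixes M :: "nat set"
  assumes "infinite M"
  shows "{m\<in>M. m < t} = enumerate M ` {..<card {m\<in>M. m < t}}"
proof -
  let ?e = "enumerate M"
  define n where "n = (LEAST j. t \<le> ?e j)"
  have n: "t \<le> ?e n"
    unfolding n_def by (rule LeastI[of _ t]) (rule le_enumerate[OF assms])
  have below: "{j. ?e j < t} = {..<n}"
  proof (intro set_eqI iffI)
    fix j
    assume "j \<in> {j. ?e j < t}"
    with n assms show "j \<in> {..<n}"
      by (metis enumerate_mono_le_iff lessThan_iff mem_Collect_eq not_le order.trans)
  next
    fix j
    assume "j \<in> {..<n}"
    then show "j \<in> {j. ?e j < t}"
      unfolding n_def by (auto dest: not_less_Least)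
  qed
  have "{m\<in>M. m < t} = ?e ` {j. ?e j < t}"
    using range_enumerate[OF assms] by auto
  moreover have "card (?e ` {..<n}) = n"
    using inj_enumerate[OF assms] by (simp add: card_image inj_on_subset)
  ultimately show ?thesis
    using below by simp
qed

lemma filterlim_card_less_at_top:
  fixes M :: "nat set"
  assumes "infinite M"
  shows "filterlim (\<lambda>t. card {m\<in>M. m < t}) at_top sequentially"
  unfolding filterlim_at_top eventually_sequentially
proof (intro allI exI impI)
  fix Z t :: nat
  assume "Suc (enumerate M Z) \<le> t"
  then have "enumerate M Z \<in> {m\<in>M. m < t}"
    using enumerate_in_set[OF assms] by auto
  then have "enumerate M Z \<in> enumerate M ` {..<card {m\<in>M. m < t}}"
    by (subst (asm) enumerate_initial_segment[OF assms])
  then show "Z \<le> card {m\<in>M. m < t}"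
    using inj_enumerate[OF assms] by (simp add: inj_image_mem_iff)
qed

lemma occ_single: "occ [a] \<gamma> n = card {j. j < n \<and> \<gamma> j = a}"
  unfolding occ_def by (rule arg_cong[where f = card]) auto

lemma frequency_in_subsequence:
  fixes M :: "nat set" and \<beta> :: "nat \<Rightarrow> 'a"
  assumes density: "(\<lambda>t. real (card {m\<in>M. m < t}) / real t) \<longlonglongrightarrow> d"
    and freq: "infinite M \<Longrightarrow> (\<lambda>N. real (occ [a] (\<beta> \<circ> enumerate M) N) / real N) \<longlonglongrightarrow> q"
  shows "(\<lambda>t. real (card {m\<in>M. m < t \<and> \<beta> m = a}) / real t) \<longlonglongrightarrow> q * d"
proof (cases "finite M")
  case True
  then have bounded: "card {m\<in>M. P m} \<le> card M" for P
    by (intro card_mono) auto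
  have "(\<lambda>t. real (card {m\<in>M. m < t}) / real t) \<longlonglongrightarrow> 0"
    by (rule tendsto_over_n_bounded_diff[where g = "\<lambda>_. 0" and K = "real (card M)"])
      (use bounded in auto)
  then have "d = 0"
    using density LIMSEQ_unique by blast
  moreover have "(\<lambda>t. real (card {m\<in>M. m < t \<and> \<beta> m = a}) / real t) \<longlonglongrightarrow> 0"
    by (rule tendsto_over_n_bounded_diff[where g = "\<lambda>_. 0" and K = "real (card M)"])
      (use bounded in auto)
  ultimately show ?thesis
    by simp
next
  case False
  define c where "c t = card {m\<in>M. m < t}" for t
  define \<gamma> where "\<gamma> = \<beta> \<circ> enumerate M"
  have count: "card {m\<in>M. m < t \<and> \<beta> m = a} = occ [a] \<gamma> (c t)" for t
  proof -
    have "{m\<in>M. m < t} = enumerate M ` {..<c t}"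
      unfolding c_def by (rule enumerate_initial_segment[OF False])
    then have "{m\<in>M. m < t \<and> \<beta> m = a} = enumerate M ` {j. j < c t \<and> \<gamma> j = a}"
      by (auto simp: \<gamma>_def)
    then show ?thesis
      using inj_enumerate[OF False] by (simp add: occ_single card_image inj_on_subset)
  qed
  have "(\<lambda>t. real (occ [a] \<gamma> (c t)) / real (c t)) \<longlonglongrightarrow> q"
    using filterlim_compose[OF freq[OF False] filterlim_card_less_at_top[OF False]]
    by (simp add: c_def \<gamma>_def)
  then have "(\<lambda>t. real (occ [a] \<gamma> (c t)) / real (c t) * (real (c t) / real t)) \<longlonglongrightarrow> q * d"
    using density unfolding c_def by (rule tendsto_mult)
  moreover have "(\<lambda>t. real (occ [a] \<gamma> (c t)) / real (c t) * (real (c t) / real t))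
      = (\<lambda>t. real (card {m\<in>M. m < t \<and> \<beta> m = a}) / real t)"
  proof
    fix t
    show "real (occ [a] \<gamma> (c t)) / real (c t) * (real (c t) / real t)
        = real (card {m\<in>M. m < t \<and> \<beta> m = a}) / real t"
      by (cases "c t = 0") (simp_all add: count occ_single)
  qed
  ultimately show ?thesis
    by (simp only:)
qed

section \<open>Block occurrences\<close>

definition occurs_at :: "'a list \<Rightarrow> (nat \<Rightarrow> 'a) \<Rightarrow> nat \<Rightarrow> bool" where
  "occurs_at w \<beta> i \<longleftrightarrow> (\<forall>j<length w. \<beta> (i + j) = w ! j)"

lemma occ_eq_card_occurs_at: "occ w \<beta> N = card {i. i + length w \<le> N \<and> occurs_at w \<beta> i}"
  unfolding occ_def occurs_at_def ..

lemma occurs_at_snoc: "occurs_at (u @ [a]) \<beta> i \<longleftrightarrow> occurs_at u \<beta> i \<and> \<beta> (i + length u) = a"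
  unfolding occurs_at_def by (auto simp: nth_append less_Suc_eq)

lemma card_less_shifted:
  fixes M :: "nat set"
  assumes "\<And>m. k \<le> m \<Longrightarrow> m \<in> M \<longleftrightarrow> Q (m - k)"
  shows "card {i. i + k < t \<and> Q i} \<le> card {m\<in>M. m < t}"
    and "card {m\<in>M. m < t} \<le> card {i. i + k < t \<and> Q i} + k"
proof -
  have shift: "(\<lambda>i. i + k) ` {i. i + k < t \<and> Q i} = {m\<in>M. m < t \<and> k \<le> m}"
  proof (intro set_eqI iffI)
    fix m
    assume "m \<in> {m\<in>M. m < t \<and> k \<le> m}"
    moreover from this have "Q (m - k)"
      using assms[of m] by simp
    ultimately show "m \<in> (\<lambda>i. i + k) ` {i. i + k < t \<and> Q i}"
      by (intro image_eqI[of _ _ "m - k"]) auto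
  next
    fix m
    assume "m \<in> (\<lambda>i. i + k) ` {i. i + k < t \<and> Q i}"
    then obtain i where "m = i + k" "i + k < t" "Q i"
      by blast
    then show "m \<in> {m\<in>M. m < t \<and> k \<le> m}"
      using assms[of m] by simp
  qed
  have shifted: "card {i. i + k < t \<and> Q i} = card {m\<in>M. m < t \<and> k \<le> m}"
    unfolding shift[symmetric] by (rule card_image[symmetric]) (simp add: inj_on_def)
  show "card {i. i + k < t \<and> Q i} \<le> card {m\<in>M. m < t}"
    unfolding shifted by (rule card_mono) auto
  have "card {m\<in>M. m < t} \<le> card ({m\<in>M. m < t \<and> k \<le> m} \<union> {..<k})"
    by (rule card_mono) auto
  also have "\<dots> \<le> card {m\<in>M. m < t \<and> k \<le> m} + card {..<k}"
    by (rule card_Un_le)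
  finally show "card {m\<in>M. m < t} \<le> card {i. i + k < t \<and> Q i} + k"
    unfolding shifted by simp
qed

lemma occ_Nil: "occ [] \<beta> N = Suc N"
  using card_atMost[of N] by (simp add: occ_eq_card_occurs_at occurs_at_def atMost_def)

lemma snoc_frequency_from_block_positions:
  fixes \<beta> :: "nat \<Rightarrow> 'a" and M :: "nat set"
  assumes block: "\<And>m. length u \<le> m \<Longrightarrow> m \<in> M \<longleftrightarrow> occurs_at u \<beta> (m - length u)"
    and freq_u: "(\<lambda>N. real (occ u \<beta> N) / real N) \<longlonglongrightarrow> d"
    and freq_a: "infinite M \<Longrightarrow> (\<lambda>N. real (occ [a] (\<beta> \<circ> enumerate M) N) / real N) \<longlonglongrightarrow> q"
  shows "(\<lambda>N. real (occ (u @ [a]) \<beta> N) / real N) \<longlonglongrightarrow> q * d"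
proof -
  let ?k = "length u"
  have "\<bar>real (card {m\<in>M. m < t}) - real (occ u \<beta> t)\<bar> \<le> real ?k + 1" for t
  proof -
    have "{m\<in>M. m < Suc t} \<subseteq> insert t {m\<in>M. m < t}"
      by auto
    then have "card {m\<in>M. m < Suc t} \<le> card (insert t {m\<in>M. m < t})"
      by (rule card_mono[rotated]) simp
    also have "\<dots> \<le> card {m\<in>M. m < t} + 1"
      by (simp add: card_insert_if)
    finally have "card {m\<in>M. m < Suc t} \<le> card {m\<in>M. m < t} + 1" .
    moreover have "card {m\<in>M. m < t} \<le> card {m\<in>M. m < Suc t}"
      by (rule card_mono) auto
    moreover have "occ u \<beta> t = card {i. i + ?k < Suc t \<and> occurs_at u \<beta> i}"
      unfolding occ_eq_card_occurs_at less_Suc_eq_le ..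
    ultimately show ?thesis
      using card_less_shifted[OF block, of "Suc t"] by linarith
  qed
  then have density: "(\<lambda>t. real (card {m\<in>M. m < t}) / real t) \<longlonglongrightarrow> d"
    by (rule tendsto_over_n_bounded_diff[OF freq_u])
  have snoc_block: "m \<in> {m\<in>M. \<beta> m = a} \<longleftrightarrow> occurs_at (u @ [a]) \<beta> (m - ?k)" if "?k \<le> m" for m
    using block[OF that] that by (simp add: occurs_at_snoc)
  have snoc_bound: "\<bar>real (occ (u @ [a]) \<beta> t) - real (card {m\<in>M. m < t \<and> \<beta> m = a})\<bar> \<le> real ?k"
    for t
  proof -
    have "occ (u @ [a]) \<beta> t = card {i. i + ?k < t \<and> occurs_at (u @ [a]) \<beta> i}"
      unfolding occ_eq_card_occurs_at by (simp add: Suc_le_eq)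
    moreover have "{m \<in> {m\<in>M. \<beta> m = a}. m < t} = {m\<in>M. m < t \<and> \<beta> m = a}"
      by auto
    ultimately show ?thesis
      using card_less_shifted[OF snoc_block, of t] by simp
  qed
  show ?thesis
    using frequency_in_subsequence[OF density freq_a] snoc_bound by (rule tendsto_over_n_bounded_diff)
qed

section \<open>Selection by automata\<close>

lemma filter_range_strict_mono_upt:
  fixes e :: "nat \<Rightarrow> nat"
  assumes "strict_mono e"
  shows "filter (\<lambda>j. j \<in> range e) [0..<e m] = map e [0..<m]"
proof (induction m)
  case 0
  then show ?case
    using assms by (auto simp: filter_empty_conv strict_mono_less)
next
  case (Suc m)
  have "e m < e (Suc m)"
    using assms by (simp add: strict_mono_less)
  then have "[0..<e (Suc m)] = [0..<e m] @ e m # [Suc (e m)..<e (Suc m)]"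
    by (metis le0 less_imp_le upt_add_eq_append le_add_diff_inverse upt_conv_Cons)
  moreover have "filter (\<lambda>j. j \<in> range e) [Suc (e m)..<e (Suc m)] = []"
    using assms by (auto simp: filter_empty_conv strict_mono_less Suc_le_eq)
  ultimately show ?case
    using Suc by simp
qed

primrec select_letters :: "('s, 'a) dfa \<Rightarrow> 's \<Rightarrow> 'a list \<Rightarrow> 'a list" where
  "select_letters A q [] = []"
| "select_letters A q (c # v) =
     (if q \<in> accept A then [c] else []) @ select_letters A (delta A q c) v"

lemma select_letters_append:
  "select_letters A q (v @ w) = select_letters A q v @ select_letters A (foldl (delta A) q v) w"
  by (induction v arbitrary: q) auto

lemma run_eq_foldl: "run A \<alpha> i = foldl (delta A) (start A) (map \<alpha> [0..<i])"
  by (induction i) auto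

lemma select_letters_run:
  "select_letters A (start A) (map \<alpha> [0..<i]) = map \<alpha> (filter (\<lambda>j. j \<in> selected A \<alpha>) [0..<i])"
  by (induction i) (auto simp: select_letters_append run_eq_foldl[symmetric] selected_def)

lemma select_letters_run_enumerate:
  assumes "infinite (selected A \<alpha>)"
  shows "select_letters A (start A) (map \<alpha> [0..<enumerate (selected A \<alpha>) m])
    = map (dfa_select A \<alpha>) [0..<m]"
  using filter_range_strict_mono_upt[OF strict_mono_enumerate[OF assms], of m]
  by (simp add: select_letters_run range_enumerate[OF assms] dfa_select_def)

lemma foldl_delta_in_states: "wf_dfa A \<Longrightarrow> q \<in> states A \<Longrightarrow> foldl (delta A) q v \<in> states A"
  by (induction v arbitrary: q) (auto simp: wf_dfa_def)

lemma strongly_connected_obtains_word: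
  assumes "strongly_connected A" and "q \<in> states A" and "q' \<in> states A"
  obtains y where "foldl (delta A) q y = q'"
proof -
  have "(q, q') \<in> (dfa_edges A)\<^sup>*"
    using assms unfolding strongly_connected_def by blast
  then have "\<exists>y. foldl (delta A) q y = q'"
  proof (induction rule: rtrancl_induct)
    case base
    show ?case
      by (rule exI[of _ "[]"]) simp
  next
    case (step x z)
    then obtain y a where "foldl (delta A) q y = x" and "z = delta A x a"
      unfolding dfa_edges_def by blast
    then show ?case
      by (intro exI[of _ "y @ [a]"]) simp
  qed
  then show ?thesis
    using that by blast
qed

text \<open>The theorem quantifies over automata with state type \<open>nat\<close>, so an automaton given by
  a transition function on any countable type is transported along \<open>to_nat\<close>.\<close>

definition reachable_dfa :: "('z::countable \<Rightarrow> 'a \<Rightarrow> 'z) \<Rightarrow> 'z \<Rightarrow> 'z set \<Rightarrow> (nat, 'a) dfa" where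
  "reachable_dfa d z0 F =
     \<lparr>states = to_nat ` range (foldl d z0), delta = (\<lambda>n c. to_nat (d (from_nat n) c)),
      start = to_nat z0, accept = to_nat ` (range (foldl d z0) \<inter> F)\<rparr>"

lemma run_reachable_dfa: "run (reachable_dfa d z0 F) \<alpha> i = to_nat (foldl d z0 (map \<alpha> [0..<i]))"
  by (induction i) (simp_all add: reachable_dfa_def)

lemma selected_reachable_dfa:
  "selected (reachable_dfa d z0 F) \<alpha> = {i. foldl d z0 (map \<alpha> [0..<i]) \<in> F}"
  unfolding selected_def run_reachable_dfa by (simp add: reachable_dfa_def inj_image_mem_iff)

lemma wf_reachable_dfa:
  assumes "finite (range (foldl d z0))"
  shows "wf_dfa (reachable_dfa d z0 F)"
proof -
  have "d (foldl d z0 v) c \<in> range (foldl d z0)" for v c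
    using rangeI[of "foldl d z0" "v @ [c]"] by simp
  moreover have "z0 \<in> range (foldl d z0)"
    using rangeI[of "foldl d z0" "[]"] by simp
  ultimately show ?thesis
    using assms unfolding wf_dfa_def reachable_dfa_def by auto
qed

lemma strongly_connected_reachable_dfa:
  assumes "\<And>v. \<exists>w. foldl d z0 (v @ w) = z0"
  shows "strongly_connected (reachable_dfa d z0 F)"
proof -
  let ?B = "reachable_dfa d z0 F"
  have edges: "(to_nat (foldl d z0 v), to_nat (foldl d z0 (v @ w))) \<in> (dfa_edges ?B)\<^sup>*" for v w
  proof (induction w rule: rev_induct)
    case (snoc c w)
    have "(to_nat (foldl d z0 (v @ w)), to_nat (foldl d z0 (v @ w @ [c]))) \<in> dfa_edges ?B"
      unfolding dfa_edges_def reachable_dfa_def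
      by (auto intro!: image_eqI[of _ _ "foldl d z0 (v @ w)"] rangeI)
    with snoc show ?case
      by simp
  qed simp
  show ?thesis
    unfolding strongly_connected_def
  proof (intro ballI)
    fix n1 n2
    assume "n1 \<in> states ?B" and "n2 \<in> states ?B"
    then obtain v1 v2 where n: "n1 = to_nat (foldl d z0 v1)" "n2 = to_nat (foldl d z0 v2)"
      by (auto simp: reachable_dfa_def)
    obtain w where w: "foldl d z0 (v1 @ w) = z0"
      using assms by blast
    have "(n1, to_nat z0) \<in> (dfa_edges ?B)\<^sup>*"
      using edges[of v1 w] by (simp only: n w)
    moreover have "(to_nat z0, n2) \<in> (dfa_edges ?B)\<^sup>*"
      using edges[of "[]" v2] by (simp add: n)
    ultimately show "(n1, n2) \<in> (dfa_edges ?B)\<^sup>*"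
      by (rule rtrancl_trans)
  qed
qed

section \<open>Automata remembering the last selected letters\<close>

definition take_last :: "nat \<Rightarrow> 'b list \<Rightarrow> 'b list" where
  "take_last k xs = rev (take k (rev xs))"

lemma take_last_append_take_last: "take_last k (take_last k xs @ ys) = take_last k (xs @ ys)"
  unfolding take_last_def by (simp add: take_append)

lemma take_last_append_long: "k \<le> length ys \<Longrightarrow> take_last k (xs @ ys) = take_last k ys"
  unfolding take_last_def by (simp add: take_append)

lemma take_last_short: "length xs \<le> k \<Longrightarrow> take_last k xs = xs"
  unfolding take_last_def by simp

lemma length_take_last: "length (take_last k xs) \<le> k"
  unfolding take_last_def by simp

lemma set_take_last: "set (take_last k xs) \<subseteq> set xs"
  unfolding take_last_def by (metis in_set_takeD set_rev subsetI)

lemma take_last_map_upt: "k \<le> m \<Longrightarrow> take_last k (map f [0..<m]) = map f [m - k..<m]"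
proof -
  assume "k \<le> m"
  then have "map f [0..<m] = map f [0..<m - k] @ map f [m - k..<m]"
    by (metis diff_le_self le0 upt_add_eq_append add_0 le_add_diff_inverse2 map_append)
  then show ?thesis
    using \<open>k \<le> m\<close> by (simp add: take_last_append_long take_last_short)
qed

definition window_step :: "('s, 'a) dfa \<Rightarrow> nat \<Rightarrow> ('a \<Rightarrow> 'b) \<Rightarrow> 's \<times> 'b list \<Rightarrow> 'a \<Rightarrow> 's \<times> 'b list"
  where "window_step A k f z c =
    (delta A (fst z) c, if fst z \<in> accept A then take_last k (snd z @ [f c]) else snd z)"

lemma foldl_window_step:
  "length h \<le> k \<Longrightarrow> foldl (window_step A k f) (q, h) v =
     (foldl (delta A) q v, take_last k (h @ map f (select_letters A q v)))"
proof (induction v arbitrary: q h)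
  case Nil
  then show ?case
    by (simp add: take_last_short)
next
  case (Cons c v)
  then show ?case
    by (simp add: window_step_def length_take_last take_last_append_take_last)
qed

lemma finite_window_reachable:
  assumes "wf_dfa A" and "q \<in> states A" and "length h \<le> k"
    and "finite (range f)" and "set h \<subseteq> range f"
  shows "finite (range (foldl (window_step A k f) (q, h)))"
proof (rule finite_subset)
  show "range (foldl (window_step A k f) (q, h)) \<subseteq> states A \<times> {h. set h \<subseteq> range f \<and> length h \<le> k}"
  proof
    fix z
    assume "z \<in> range (foldl (window_step A k f) (q, h))"
    then obtain v where "z = foldl (window_step A k f) (q, h) v"
      by blast
    then have z: "z = (foldl (delta A) q v, take_last k (h @ map f (select_letters A q v)))"
      using foldl_window_step[OF assms(3)] by simp
    have "set (take_last k (h @ map f (select_letters A q v))) \<subseteq> range f"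
      using set_take_last[of k "h @ map f (select_letters A q v)"] assms(5) by auto
    then show "z \<in> states A \<times> {h. set h \<subseteq> range f \<and> length h \<le> k}"
      using z foldl_delta_in_states[OF assms(1,2)] length_take_last by auto
  qed
  show "finite (states A \<times> {h. set h \<subseteq> range f \<and> length h \<le> k})"
    using assms(1,4) finite_lists_length_le unfolding wf_dfa_def by blast
qed

lemma window_returns:
  fixes f :: "'a \<Rightarrow> 'b"
  assumes "wf_dfa A" and "strongly_connected A"
    and "foldl (delta A) (start A) w0 = start A" and "k \<le> length (select_letters A (start A) w0)"
  defines "z0 \<equiv> foldl (window_step A k f) (start A, []) w0"
  shows "\<exists>w. foldl (window_step A k f) z0 (v @ w) = z0"
proof -
  have start: "start A \<in> states A"
    using assms(1) by (simp add: wf_dfa_def)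
  have reset: "foldl (window_step A k f) (start A, h) w0 = z0" if "length h \<le> k" for h
    using assms(3,4) that by (simp add: z0_def foldl_window_step take_last_append_long)
  let ?x0 = "take_last k (map f (select_letters A (start A) w0))"
  define q where "q = foldl (delta A) (start A) v"
  define h where "h = take_last k (?x0 @ map f (select_letters A (start A) v))"
  have "z0 = (start A, ?x0)"
    using assms(3) by (simp add: z0_def foldl_window_step)
  then have "foldl (window_step A k f) z0 v = (q, h)"
    unfolding q_def h_def by (simp add: foldl_window_step length_take_last)
  moreover have "q \<in> states A"
    unfolding q_def by (rule foldl_delta_in_states[OF assms(1) start])
  moreover have "length h \<le> k"
    unfolding h_def by (rule length_take_last)
  moreover obtain y where "foldl (delta A) q y = start A"
    using strongly_connected_obtains_word[OF assms(2) \<open>q \<in> states A\<close> start] .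
  ultimately have "foldl (window_step A k f) z0 (v @ y @ w0)
      = foldl (window_step A k f) (start A, take_last k (h @ map f (select_letters A q y))) w0"
    by (simp add: foldl_window_step)
  also have "\<dots> = z0"
    by (rule reset[OF length_take_last])
  finally have "foldl (window_step A k f) z0 (v @ y @ w0) = z0" .
  then show ?thesis
    by blast
qed

lemma selected_window_dfa:
  fixes A :: "('s::countable, 'a) dfa" and f :: "'a \<Rightarrow> 'b::countable"
  assumes "infinite (selected A \<alpha>)" and "length x0 \<le> k"
  shows "selected (reachable_dfa (window_step A k f) (start A, x0) {z. fst z \<in> accept A \<and> snd z = t}) \<alpha>
    = enumerate (selected A \<alpha>) ` {m. take_last k (x0 @ map (f \<circ> dfa_select A \<alpha>) [0..<m]) = t}"
proof -
  let ?S = "selected A \<alpha>"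
  let ?B = "reachable_dfa (window_step A k f) (start A, x0) {z. fst z \<in> accept A \<and> snd z = t}"
  let ?P = "\<lambda>m. take_last k (x0 @ map (f \<circ> dfa_select A \<alpha>) [0..<m]) = t"
  have sel: "i \<in> selected ?B \<alpha>
      \<longleftrightarrow> i \<in> ?S \<and> take_last k (x0 @ map f (select_letters A (start A) (map \<alpha> [0..<i]))) = t" for i
    unfolding selected_reachable_dfa
    by (simp add: foldl_window_step[OF assms(2)] run_eq_foldl[symmetric] selected_def)
  have enum: "enumerate ?S m \<in> selected ?B \<alpha> \<longleftrightarrow> ?P m" for m
    unfolding sel using enumerate_in_set[OF assms(1)]
    by (simp add: select_letters_run_enumerate[OF assms(1)])
  show ?thesis
  proof (intro set_eqI iffI)
    fix i
    assume i: "i \<in> selected ?B \<alpha>"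
    then obtain m where "i = enumerate ?S m"
      using sel range_enumerate[OF assms(1)] by blast
    with i enum show "i \<in> enumerate ?S ` {m. ?P m}"
      by blast
  qed (use enum in blast)
qed

text \<open>Letters outside \<open>u\<close> are identified, so that the window automaton has finitely many states
  even over an infinite alphabet.\<close>

definition mark :: "'a list \<Rightarrow> 'a \<Rightarrow> 'a option" where
  "mark u c = (if c \<in> set u then Some c else None)"

lemma finite_range_mark: "finite (range (mark u))"
  by (rule finite_subset[of _ "insert None (Some ` set u)"]) (auto simp: mark_def)

lemma take_last_mark_eq_iff:
  assumes "length u \<le> m"
  shows "take_last (length u) (x0 @ map (mark u \<circ> \<beta>) [0..<m]) = map Some u
    \<longleftrightarrow> occurs_at u \<beta> (m - length u)"
proof -
  have "take_last (length u) (x0 @ map (mark u \<circ> \<beta>) [0..<m]) = map (mark u \<circ> \<beta>) [m - length u..<m]"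
    using assms by (simp add: take_last_append_long take_last_map_upt)
  then show ?thesis
    using assms by (auto simp: list_eq_iff_nth_eq mark_def occurs_at_def split: if_splits)
qed

lemma exists_selecting_cycle:
  assumes "wf_dfa A" and "strongly_connected A" and "infinite (selected A \<alpha>)"
  obtains w where "foldl (delta A) (start A) w = start A"
    and "k \<le> length (select_letters A (start A) w)"
proof -
  let ?w = "map \<alpha> [0..<enumerate (selected A \<alpha>) k]"
  have start: "start A \<in> states A"
    using assms(1) by (simp add: wf_dfa_def)
  obtain y where "foldl (delta A) (foldl (delta A) (start A) ?w) y = start A"
    using strongly_connected_obtains_word[OF assms(2) foldl_delta_in_states[OF assms(1) start] start] .
  moreover have "length (select_letters A (start A) ?w) = k"
    by (simp add: select_letters_run_enumerate[OF assms(3)])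
  ultimately show ?thesis
    using that[of "?w @ y"] by (simp add: select_letters_append)
qed

lemma block_selecting_dfa:
  fixes A :: "(nat, 'a::countable) dfa" and u :: "'a list"
  assumes wf: "wf_dfa A" and sc: "strongly_connected A" and inf: "infinite (selected A \<alpha>)"
  obtains B :: "(nat, 'a) dfa" and M
  where "wf_dfa B" and "strongly_connected B" and "selected B \<alpha> = enumerate (selected A \<alpha>) ` M"
    and "\<And>m. length u \<le> m \<Longrightarrow> m \<in> M \<longleftrightarrow> occurs_at u (dfa_select A \<alpha>) (m - length u)"
proof -
  let ?k = "length u"
  let ?step = "window_step A ?k (mark u)"
  txt \<open>Start with a full window, reached by a cycle through the start state: from a full window
    every reachable configuration can be reset to the initial one, so \<open>B\<close> is strongly connected.\<close>
  obtain w0 where cycle: "foldl (delta A) (start A) w0 = start A"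
    and long: "?k \<le> length (select_letters A (start A) w0)"
    using exists_selecting_cycle[OF wf sc inf] .
  define x0 where "x0 = take_last ?k (map (mark u) (select_letters A (start A) w0))"
  have x0: "length x0 \<le> ?k" "set x0 \<subseteq> range (mark u)"
    unfolding x0_def using length_take_last set_take_last by fastforce+
  have z0: "foldl ?step (start A, []) w0 = (start A, x0)"
    using cycle by (simp add: x0_def foldl_window_step)
  define B where "B = reachable_dfa ?step (start A, x0) {z. fst z \<in> accept A \<and> snd z = map Some u}"
  define M where "M = {m. take_last ?k (x0 @ map (mark u \<circ> dfa_select A \<alpha>) [0..<m]) = map Some u}"
  have "wf_dfa B"
    using wf x0 finite_range_mark unfolding B_def
    by (intro wf_reachable_dfa finite_window_reachable) (simp_all add: wf_dfa_def)
  moreover have "strongly_connected B"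
    unfolding B_def using window_returns[OF wf sc cycle long, of "mark u"]
    by (intro strongly_connected_reachable_dfa) (simp only: z0)
  moreover have "selected B \<alpha> = enumerate (selected A \<alpha>) ` M"
    unfolding B_def M_def by (rule selected_window_dfa[OF inf x0(1)])
  moreover have "m \<in> M \<longleftrightarrow> occurs_at u (dfa_select A \<alpha>) (m - ?k)" if "?k \<le> m" for m
    unfolding M_def using take_last_mark_eq_iff[OF that] by simp
  ultimately show ?thesis
    using that by blast
qed

lemma dfa_select_of_selected_image:
  assumes "selected B \<alpha> = enumerate (selected A \<alpha>) ` M"
    and "infinite (selected A \<alpha>)" and "infinite M"
  shows "dfa_select B \<alpha> = dfa_select A \<alpha> \<circ> enumerate M"
  using enumerate_image_strict_mono[OF strict_mono_enumerate[OF assms(2)] assms(3)] assms(1)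
  by (simp add: dfa_select_def fun_eq_iff)

lemma snoc_frequency_in_selection:
  fixes A :: "(nat, 'a::countable) dfa"
  assumes wf: "wf_dfa A" and sc: "strongly_connected A" and inf: "infinite (selected A \<alpha>)"
    and letter: "\<And>B :: (nat, 'a) dfa. wf_dfa B \<Longrightarrow> strongly_connected B \<Longrightarrow>
      infinite (selected B \<alpha>) \<Longrightarrow> (\<lambda>N. real (occ [a] (dfa_select B \<alpha>) N) / real N) \<longlonglongrightarrow> q"
    and freq_u: "(\<lambda>N. real (occ u (dfa_select A \<alpha>) N) / real N) \<longlonglongrightarrow> d"
  shows "(\<lambda>N. real (occ (u @ [a]) (dfa_select A \<alpha>) N) / real N) \<longlonglongrightarrow> q * d"
proof -
  obtain B :: "(nat, 'a) dfa" and M where B: "wf_dfa B" "strongly_connected B"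
    and selB: "selected B \<alpha> = enumerate (selected A \<alpha>) ` M"
    and M: "\<And>m. length u \<le> m \<Longrightarrow> m \<in> M \<longleftrightarrow> occurs_at u (dfa_select A \<alpha>) (m - length u)"
    using block_selecting_dfa[OF wf sc inf, of u] by blast
  have "(\<lambda>N. real (occ [a] (dfa_select A \<alpha> \<circ> enumerate M) N) / real N) \<longlonglongrightarrow> q"
    if "infinite M"
  proof -
    have "infinite (selected B \<alpha>)"
      unfolding selB using that inj_enumerate[OF inf] by (auto dest: finite_imageD inj_on_subset)
    with letter[OF B] show ?thesis
      by (simp add: dfa_select_of_selected_image[OF selB inf that])
  qed
  with M freq_u show ?thesis
    by (rule snoc_frequency_from_block_positions)
qed

theorem lemma5p3:
  fixes p :: "'a::countable \<Rightarrow> real" and \<alpha> :: "nat \<Rightarrow> 'a"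
  assumes "bernoulli_dist p"
    and "mu_distributed p \<alpha>"
  shows "(\<forall>A :: (nat, 'a) dfa. wf_dfa A \<longrightarrow> strongly_connected A \<longrightarrow>
            infinite (selected A \<alpha>) \<longrightarrow> mu_distributed p (dfa_select A \<alpha>))
     \<longleftrightarrow>
         (\<forall>A :: (nat, 'a) dfa. wf_dfa A \<longrightarrow> strongly_connected A \<longrightarrow>
            infinite (selected A \<alpha>) \<longrightarrow>
            (\<forall>a. (\<lambda>N. real (occ [a] (dfa_select A \<alpha>) N) / real N) \<longlonglongrightarrow> p a))"
    (is "?distributed \<longleftrightarrow> ?letters")
proof
  assume ?distributed
  moreover have "mu p [a] = p a" for a
    by (simp add: mu_def)
  ultimately show ?letters
    unfolding mu_distributed_def by (metis not_Cons_self2)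
next
  assume letters: ?letters
  show ?distributed
  proof (intro allI impI)
    fix A :: "(nat, 'a) dfa"
    assume A: "wf_dfa A" "strongly_connected A" "infinite (selected A \<alpha>)"
    have "(\<lambda>N. real (occ u (dfa_select A \<alpha>) N) / real N) \<longlonglongrightarrow> mu p u" for u
    proof (induction u rule: rev_induct)
      case Nil
      show ?case
        using LIMSEQ_Suc_n_over_n by (simp add: occ_Nil mu_def)
    next
      case (snoc a u)
      have "mu p (u @ [a]) = p a * mu p u"
        by (simp add: mu_def)
      moreover have "(\<lambda>N. real (occ (u @ [a]) (dfa_select A \<alpha>) N) / real N) \<longlonglongrightarrow> p a * mu p u"
        by (rule snoc_frequency_in_selection[OF A _ snoc]) (use letters in blast)
      ultimately show ?case
        by simp
    qed
    then show "mu_distributed p (dfa_select A \<alpha>)"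
      unfolding mu_distributed_def by blast
  qed
qed

end
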